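(* Assume $L_1\subseteq\bigcup_{\alpha\in\Sigma^\kappa}\Sigma^*\alpha\Sigma^*\bar\alpha$ and $L_2\subseteq\bigcup_{\alpha\in\Sigma^\kappa}\alpha\Sigma^*\bar\alpha\Sigma^*$. Let $M=\mathcal{I}\times\mathcal{F}$ where $\mathcal{I},\mathcal{F}$ are the initial and final states of $\mathcal{A}$; for $\mu=(I,F)\in M$ with $F=((d_1,d_2),e_1,e_2,\kappa)$ let $R_\mu$ be the set of labels of paths in $\mathcal{A}$ from $I$ to $F$ and $B_\mu=B(d_1,d_2,e_1,e_2)$. Let $\sigma=\max_{\mu\in M}\lambda_{B_\mu}$, $\rho=\max_{\mu\in M}\lambda_{R_\mu}$, and $\eta=\lambda_{\mathcal{H}_\kappa(L_1,L_2)}$. Then $\eta=\max\{\sigma,\sqrt\rho\}$.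
   Context: $\Sigma$ is a finite alphabet with at least two letters with an involution $a\mapsto\bar a$ ($\bar{\bar a}=a$), extended to words by $\overline{a_1\cdots a_m}=\bar a_m\cdots\bar a_1$ and to languages elementwise. $\kappa$ is a fixed positive integer. $\mathcal{H}_\kappa(L_1,L_2)=\{\gamma\alpha\beta\bar\alpha\bar\gamma:|\alpha|\ge\kappa,\ \gamma\alpha\beta\bar\alpha\in L_1\text{ or }\alpha\beta\bar\alpha\bar\gamma\in L_2\}$. $L_1,L_2$ are regular; $\mathcal{A}_1=(Q_1,\Sigma,E_1,\{q_{01}\},F_1)$ is a complete DFA accepting $L_1$, $\mathcal{A}_2=(Q_2,\Sigma,E_2,\{q_{02}\},F_2)$ a complete DFA accepting $\overline{L_2}$; $p\cdot w$ is the state reached from $p$ on $w$. Growth indicator: $\lambda_L=\inf\{\lambda\ge0:\exists c>0\ \forall m: |L\cap\Sigma^m|\le c\lambda^m\}$. Construction of $\mathcal{A}$: $Q_{12}=\{(q_{01}\cdot w,q_{02}\cdot w):w\in\Sigma^*\}$ with $(p_1,p_2)\cdot w=(p_1\cdot w,p_2\cdot w)$. For $(p_1,p_2,q_1,q_2)\in Q_1\times Q_2\times Q_1\times Q_2$ let $B(p_1,p_2,q_1,q_2)=\{w:p_1\cdot w=q_1,\ p_2\cdot\bar w=q_2\}$; the quadruple is a basic bridge if this set is nonempty. States of $\mathcal{A}$ are all $((p_1,p_2),q_1,q_2,\ell)$ with $(p_1,p_2)\in Q_{12}$, $q_i\in Q_i$, $\ell\in\{0,\dots,\kappa\}$, $(p_1,p_2,q_1,q_2)$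 a basic bridge. For $a\in\Sigma$, $P\in Q_{12}$, $q_i\in Q_i$, there is an $a$-arc from $(P,q_1\cdot\bar a,q_2\cdot\bar a,\ell)$ to $(P\cdot a,q_1,q_2,\ell')$, provided both are states, exactly when: $\ell=\ell'=0$ and $q_1\cdot\bar a\notin F_1$, $q_2\cdot\bar a\notin F_2$; or $\ell=0,\ell'=1$ and ($q_1\cdot\bar a\in F_1$ or $q_2\cdot\bar a\in F_2$); or $1\le\ell<\kappa$ and $\ell'=\ell+1$. Initial states: $((q_{01},q_{02}),q_1',q_2',0)$; final states: those with $\ell=\kappa$. $\mathcal{A}$ is trimmed: states not reachable from an initial state, or from which no final state is reachable, are removed. *)

theory Defs
  imports Complex_Main
begin

definition wbar :: "('a \<Rightarrow> 'a) \<Rightarrow> 'a list \<Rightarrow> 'a list" where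
  "wbar iv w = rev (map iv w)"

definition run :: "('s \<Rightarrow> 'a \<Rightarrow> 's) \<Rightarrow> 's \<Rightarrow> 'a list \<Rightarrow> 's" where
  "run \<delta> q w = foldl \<delta> q w"

definition dfa_lang :: "('s \<Rightarrow> 'a \<Rightarrow> 's) \<Rightarrow> 's \<Rightarrow> 's set \<Rightarrow> 'a list set" where
  "dfa_lang \<delta> q0 F = {w. run \<delta> q0 w \<in> F}"

definition growth :: "'a list set \<Rightarrow> real" where
  "growth L = Inf {l::real. l \<ge> 0 \<and>
      (\<exists>c>0. \<forall>m. real (card {w \<in> L. length w = m}) \<le> c * l ^ m)}"

definition hairpin :: "('a \<Rightarrow> 'a) \<Rightarrow> nat \<Rightarrow> 'a list set \<Rightarrow> 'a list set \<Rightarrow> 'a list set" where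
  "hairpin iv \<kappa> L1 L2 = {\<gamma> @ \<alpha> @ \<beta> @ wbar iv \<alpha> @ wbar iv \<gamma> | \<gamma> \<alpha> \<beta>.
      length \<alpha> \<ge> \<kappa> \<and>
      (\<gamma> @ \<alpha> @ \<beta> @ wbar iv \<alpha> \<in> L1 \<or> \<alpha> @ \<beta> @ wbar iv \<alpha> @ wbar iv \<gamma> \<in> L2)}"

definition Q12 :: "('s1 \<Rightarrow> 'a \<Rightarrow> 's1) \<Rightarrow> 's1 \<Rightarrow> ('s2 \<Rightarrow> 'a \<Rightarrow> 's2) \<Rightarrow> 's2 \<Rightarrow> ('s1 \<times> 's2) set" where
  "Q12 \<delta>1 q01 \<delta>2 q02 = {(run \<delta>1 q01 w, run \<delta>2 q02 w) | w. True}"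

definition Bset :: "('a \<Rightarrow> 'a) \<Rightarrow> ('s1 \<Rightarrow> 'a \<Rightarrow> 's1) \<Rightarrow> ('s2 \<Rightarrow> 'a \<Rightarrow> 's2)
    \<Rightarrow> 's1 \<Rightarrow> 's2 \<Rightarrow> 's1 \<Rightarrow> 's2 \<Rightarrow> 'a list set" where
  "Bset iv \<delta>1 \<delta>2 p1 p2 q1 q2 = {w. run \<delta>1 p1 w = q1 \<and> run \<delta>2 p2 (wbar iv w) = q2}"

type_synonym ('s1, 's2) hstate = "('s1 \<times> 's2) \<times> 's1 \<times> 's2 \<times> nat"

definition is_state :: "('a \<Rightarrow> 'a) \<Rightarrow> nat \<Rightarrow> ('s1 \<Rightarrow> 'a \<Rightarrow> 's1) \<Rightarrow> 's1
    \<Rightarrow> ('s2 \<Rightarrow> 'a \<Rightarrow> 's2) \<Rightarrow> 's2 \<Rightarrow> ('s1, 's2) hstate \<Rightarrow> bool" where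
  "is_state iv \<kappa> \<delta>1 q01 \<delta>2 q02 s = (case s of ((p1, p2), q1, q2, l) \<Rightarrow>
      (p1, p2) \<in> Q12 \<delta>1 q01 \<delta>2 q02 \<and> l \<le> \<kappa> \<and> Bset iv \<delta>1 \<delta>2 p1 p2 q1 q2 \<noteq> {})"

definition arc :: "('a \<Rightarrow> 'a) \<Rightarrow> nat \<Rightarrow> ('s1 \<Rightarrow> 'a \<Rightarrow> 's1) \<Rightarrow> 's1 \<Rightarrow> 's1 set
    \<Rightarrow> ('s2 \<Rightarrow> 'a \<Rightarrow> 's2) \<Rightarrow> 's2 \<Rightarrow> 's2 set
    \<Rightarrow> ('s1, 's2) hstate \<Rightarrow> 'a \<Rightarrow> ('s1, 's2) hstate \<Rightarrow> bool" where
  "arc iv \<kappa> \<delta>1 q01 F1 \<delta>2 q02 F2 s a t =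
     (\<exists>p1 p2 q1 q2 l l'.
        s = ((p1, p2), \<delta>1 q1 (iv a), \<delta>2 q2 (iv a), l) \<and>
        t = ((\<delta>1 p1 a, \<delta>2 p2 a), q1, q2, l') \<and>
        is_state iv \<kappa> \<delta>1 q01 \<delta>2 q02 s \<and> is_state iv \<kappa> \<delta>1 q01 \<delta>2 q02 t \<and>
        ((l = 0 \<and> l' = 0 \<and> \<delta>1 q1 (iv a) \<notin> F1 \<and> \<delta>2 q2 (iv a) \<notin> F2) \<or>
         (l = 0 \<and> l' = 1 \<and> (\<delta>1 q1 (iv a) \<in> F1 \<or> \<delta>2 q2 (iv a) \<in> F2)) \<or>
         (1 \<le> l \<and> l < \<kappa> \<and> l' = l + 1)))"

fun apath :: "(('s1, 's2) hstate \<Rightarrow> 'a \<Rightarrow> ('s1, 's2) hstate \<Rightarrow> bool)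
    \<Rightarrow> ('s1, 's2) hstate \<Rightarrow> 'a list \<Rightarrow> ('s1, 's2) hstate \<Rightarrow> bool" where
  "apath E s [] t = (s = t)"
| "apath E s (a # w) t = (\<exists>u. E s a u \<and> apath E u w t)"

definition init_state :: "('a \<Rightarrow> 'a) \<Rightarrow> nat \<Rightarrow> ('s1 \<Rightarrow> 'a \<Rightarrow> 's1) \<Rightarrow> 's1
    \<Rightarrow> ('s2 \<Rightarrow> 'a \<Rightarrow> 's2) \<Rightarrow> 's2 \<Rightarrow> ('s1, 's2) hstate \<Rightarrow> bool" where
  "init_state iv \<kappa> \<delta>1 q01 \<delta>2 q02 s =
     (is_state iv \<kappa> \<delta>1 q01 \<delta>2 q02 s \<and> fst s = (q01, q02) \<and> snd (snd (snd s)) = 0)"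

definition final_state :: "('a \<Rightarrow> 'a) \<Rightarrow> nat \<Rightarrow> ('s1 \<Rightarrow> 'a \<Rightarrow> 's1) \<Rightarrow> 's1
    \<Rightarrow> ('s2 \<Rightarrow> 'a \<Rightarrow> 's2) \<Rightarrow> 's2 \<Rightarrow> ('s1, 's2) hstate \<Rightarrow> bool" where
  "final_state iv \<kappa> \<delta>1 q01 \<delta>2 q02 s =
     (is_state iv \<kappa> \<delta>1 q01 \<delta>2 q02 s \<and> snd (snd (snd s)) = \<kappa>)"

text \<open>M = (initial states of trimmed \<A>) \<times> (final states of trimmed \<A>).
  An initial state survives trimming iff some final state is reachable from it;
  a final state survives iff it is reachable from some initial state.\<close>
definition Mset :: "('a \<Rightarrow> 'a) \<Rightarrow> nat \<Rightarrow> ('s1 \<Rightarrow> 'a \<Rightarrow> 's1) \<Rightarrow> 's1 \<Rightarrow> 's1 set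
    \<Rightarrow> ('s2 \<Rightarrow> 'a \<Rightarrow> 's2) \<Rightarrow> 's2 \<Rightarrow> 's2 set
    \<Rightarrow> (('s1, 's2) hstate \<times> ('s1, 's2) hstate) set" where
  "Mset iv \<kappa> \<delta>1 q01 F1 \<delta>2 q02 F2 =
     {(I, F). init_state iv \<kappa> \<delta>1 q01 \<delta>2 q02 I \<and> final_state iv \<kappa> \<delta>1 q01 \<delta>2 q02 F \<and>
        (\<exists>F' w. final_state iv \<kappa> \<delta>1 q01 \<delta>2 q02 F' \<and> apath (arc iv \<kappa> \<delta>1 q01 F1 \<delta>2 q02 F2) I w F') \<and>
        (\<exists>I' w. init_state iv \<kappa> \<delta>1 q01 \<delta>2 q02 I' \<and> apath (arc iv \<kappa> \<delta>1 q01 F1 \<delta>2 q02 F2) I' w F)}"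

text \<open>R_\<mu>: labels of paths from I to F (in the trimmed automaton; since I and F survive
  trimming, every intermediate state of such a path does too).\<close>
definition Rset :: "('a \<Rightarrow> 'a) \<Rightarrow> nat \<Rightarrow> ('s1 \<Rightarrow> 'a \<Rightarrow> 's1) \<Rightarrow> 's1 \<Rightarrow> 's1 set
    \<Rightarrow> ('s2 \<Rightarrow> 'a \<Rightarrow> 's2) \<Rightarrow> 's2 \<Rightarrow> 's2 set
    \<Rightarrow> ('s1, 's2) hstate \<times> ('s1, 's2) hstate \<Rightarrow> 'a list set" where
  "Rset iv \<kappa> \<delta>1 q01 F1 \<delta>2 q02 F2 \<mu> = {w. apath (arc iv \<kappa> \<delta>1 q01 F1 \<delta>2 q02 F2) (fst \<mu>) w (snd \<mu>)}"

definition Bmu :: "('a \<Rightarrow> 'a) \<Rightarrow> ('s1 \<Rightarrow> 'a \<Rightarrow> 's1) \<Rightarrow> ('s2 \<Rightarrow> 'a \<Rightarrow> 's2)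
    \<Rightarrow> ('s1, 's2) hstate \<times> ('s1, 's2) hstate \<Rightarrow> 'a list set" where
  "Bmu iv \<delta>1 \<delta>2 \<mu> = (case snd \<mu> of ((d1, d2), e1, e2, _) \<Rightarrow> Bset iv \<delta>1 \<delta>2 d1 d2 e1 e2)"

end

theory Submission
  imports Defs
begin

text \<open>A path of the automaton labelled u from an initial to a final state stays at level 0
  until the DFA states it carries certify that a factorization \<gamma> \<alpha> \<beta> of the candidate word
  u w (wbar u) completes a word of L1 or of L2, and then reads the \<kappa> letters of \<alpha>; conversely,
  the factorization of a word of the completion with |\<gamma>| minimal yields such a path. So the
  completion is the finite union over \<mu> \<in> M of the wrappings {u w (wbar u) | u \<in> R \<mu>, w \<in> B \<mu>}.
  A wrapping has at most the sum over 2k \<le> n of |R \<inter> \<Sigma>^k| |B \<inter> \<Sigma>^(n - 2k)| words of length n,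
  whence its growth is at most max \<lambda>(B) (sqrt \<lambda>(R)); fixing one u \<in> R (resp. w \<in> B) embeds B
  (resp. R, with doubled lengths) into it, which gives the reverse inequalities.\<close>

section \<open>Words and runs\<close>

lemma length_wbar [simp]: "length (wbar iv x) = length x"
  by (simp add: wbar_def)

lemma wbar_Nil [simp]: "wbar iv [] = []"
  by (simp add: wbar_def)

lemma wbar_Cons [simp]: "wbar iv (a # x) = wbar iv x @ [iv a]"
  by (simp add: wbar_def)

lemma wbar_append [simp]: "wbar iv (x @ y) = wbar iv y @ wbar iv x"
  by (simp add: wbar_def)

lemma wbar_wbar: "(\<And>a. iv (iv a) = a) \<Longrightarrow> wbar iv (wbar iv x) = x"
  by (simp add: wbar_def rev_map comp_def)

lemma wbar_take_drop: "wbar iv u = wbar iv (drop j u) @ wbar iv (take j u)"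
  by (metis append_take_drop_id wbar_append)

lemma run_Nil [simp]: "run \<delta> q [] = q"
  by (simp add: run_def)

lemma run_Cons [simp]: "run \<delta> q (a # x) = run \<delta> (\<delta> q a) x"
  by (simp add: run_def)

lemma run_append [simp]: "run \<delta> q (x @ y) = run \<delta> (run \<delta> q x) y"
  by (simp add: run_def)

lemma take_drop_append [simp]: "take n xs @ drop n xs @ ys = xs @ ys"
  by (metis append_assoc append_take_drop_id)

section \<open>Growth indicator\<close>

abbreviation words_of_length :: "'a list set \<Rightarrow> nat \<Rightarrow> 'a list set" where
  "words_of_length L m \<equiv> {w \<in> L. length w = m}"

definition growth_bounded :: "'a list set \<Rightarrow> real \<Rightarrow> bool" where
  "growth_bounded L l \<longleftrightarrow> (\<exists>c>0. \<forall>m. real (card (words_of_length L m)) \<le> c * l ^ m)"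

lemma growth_eq_Inf: "growth L = Inf {l. 0 \<le> l \<and> growth_bounded L l}"
  by (simp add: growth_def growth_bounded_def)

lemma finite_words_of_length: "finite (words_of_length (L :: 'a::finite list set) m)"
proof -
  have "finite {xs :: 'a list. length xs = m}"
    using finite_lists_length_eq[of "UNIV :: 'a set" m] by simp
  then show ?thesis by (rule finite_subset[rotated]) auto
qed

lemma card_words_of_length_le:
  "card (words_of_length (L :: 'a::finite list set) m) \<le> card (UNIV :: 'a set) ^ m"
proof -
  have "card (words_of_length L m) \<le> card {xs. set xs \<subseteq> (UNIV :: 'a set) \<and> length xs = m}"
    by (rule card_mono) (use finite_lists_length_eq[of "UNIV :: 'a set" m] in auto)
  also have "\<dots> = card (UNIV :: 'a set) ^ m"
    by (rule card_lists_length_eq) simp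
  finally show ?thesis .
qed

lemma growth_bounded_card_UNIV: "growth_bounded (L :: 'a::finite list set) (card (UNIV :: 'a set))"
  unfolding growth_bounded_def
  by (rule exI[of _ 1]) (simp add: card_words_of_length_le flip: of_nat_power)

lemma growth_bounded_mono:
  assumes "growth_bounded L l" "0 \<le> l" "l \<le> l'"
  shows "growth_bounded L l'"
proof -
  obtain c where c: "c > 0" "\<And>m. real (card (words_of_length L m)) \<le> c * l ^ m"
    using assms(1) unfolding growth_bounded_def by blast
  have "c * l ^ m \<le> c * l' ^ m" for m
    using c(1) assms(2,3) by (intro mult_left_mono power_mono) auto
  then show ?thesis unfolding growth_bounded_def using c by (blast intro: order.trans)
qed

lemma growth_bounded_subset:
  assumes "growth_bounded L' l" "L \<subseteq> (L' :: 'a::finite list set)"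
  shows "growth_bounded L l"
proof -
  obtain c where c: "c > 0" "\<And>m. real (card (words_of_length L' m)) \<le> c * l ^ m"
    using assms(1) unfolding growth_bounded_def by blast
  have "card (words_of_length L m) \<le> card (words_of_length L' m)" for m
    using assms(2) by (intro card_mono finite_words_of_length) auto
  then have "real (card (words_of_length L m)) \<le> c * l ^ m" for m
    using c(2)[of m] of_nat_le_iff order.trans by blast
  then show ?thesis unfolding growth_bounded_def using c(1) by blast
qed

lemma growth_nonneg: "0 \<le> growth (L :: 'a::finite list set)"
proof -
  have "{l. 0 \<le> l \<and> growth_bounded L l} \<noteq> {}"
    using growth_bounded_card_UNIV[of L] of_nat_0_le_iff by blast
  then show ?thesis unfolding growth_eq_Inf by (rule cInf_greatest) simp
qed

lemma growth_le:
  assumes "0 \<le> x" "\<And>l. x < l \<Longrightarrow> growth_bounded L l"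
  shows "growth L \<le> x"
proof (rule dense_ge)
  fix l assume "x < l"
  with assms have "l \<in> {l. 0 \<le> l \<and> growth_bounded L l}" by auto
  then show "growth L \<le> l"
    unfolding growth_eq_Inf by (rule cInf_lower) (auto intro: bdd_belowI[of _ 0])
qed

lemma growth_bounded_above:
  assumes "growth (L :: 'a::finite list set) < l"
  shows "growth_bounded L l"
proof -
  have "{l. 0 \<le> l \<and> growth_bounded L l} \<noteq> {}"
    using growth_bounded_card_UNIV[of L] of_nat_0_le_iff by blast
  from cInf_lessD[OF this] obtain l' where "0 \<le> l'" "growth_bounded L l'" "l' < l"
    using assms unfolding growth_eq_Inf by auto
  then show ?thesis using growth_bounded_mono[of L l' l] by simp
qed

lemma growth_mono:
  assumes "L \<subseteq> (L' :: 'a::finite list set)"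
  shows "growth L \<le> growth L'"
proof (rule growth_le[OF growth_nonneg])
  fix l assume "growth L' < l"
  then show "growth_bounded L l"
    using assms by (blast intro: growth_bounded_subset growth_bounded_above)
qed

lemma growth_UN_le:
  fixes L :: "'i \<Rightarrow> 'a::finite list set"
  assumes "finite I" "0 \<le> x" "\<And>i. i \<in> I \<Longrightarrow> growth (L i) \<le> x"
  shows "growth (\<Union>i\<in>I. L i) \<le> x"
proof (rule growth_le[OF assms(2)])
  fix l assume "x < l"
  have "growth_bounded (L i) l" if "i \<in> I" for i
    using assms(3)[OF that] \<open>x < l\<close> by (intro growth_bounded_above) simp
  then have "\<forall>i\<in>I. \<exists>c>0. \<forall>m. real (card (words_of_length (L i) m)) \<le> c * l ^ m"
    unfolding growth_bounded_def by blast
  then obtain c where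
    "\<forall>i\<in>I. c i > 0 \<and> (\<forall>m. real (card (words_of_length (L i) m)) \<le> c i * l ^ m)"
    by (auto dest: bchoice)
  then have c: "\<And>i. i \<in> I \<Longrightarrow> c i > 0"
    "\<And>i m. i \<in> I \<Longrightarrow> real (card (words_of_length (L i) m)) \<le> c i * l ^ m"
    by auto
  have "real (card (words_of_length (\<Union>i\<in>I. L i) m)) \<le> (1 + sum c I) * l ^ m" for m
  proof -
    have "words_of_length (\<Union>i\<in>I. L i) m = (\<Union>i\<in>I. words_of_length (L i) m)" by blast
    then have "card (words_of_length (\<Union>i\<in>I. L i) m) \<le> (\<Sum>i\<in>I. card (words_of_length (L i) m))"
      using card_UN_le[OF assms(1), of "\<lambda>i. words_of_length (L i) m"] by simp
    then have "real (card (words_of_length (\<Union>i\<in>I. L i) m))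
        \<le> (\<Sum>i\<in>I. real (card (words_of_length (L i) m)))"
      by (simp only: of_nat_sum[symmetric] of_nat_le_iff)
    also have "\<dots> \<le> (\<Sum>i\<in>I. c i * l ^ m)" using c(2) by (intro sum_mono) auto
    also have "\<dots> \<le> (1 + sum c I) * l ^ m"
      using \<open>x < l\<close> assms(2) by (simp add: sum_distrib_right distrib_right)
    finally show ?thesis .
  qed
  moreover have "0 < 1 + sum c I" using c(1) by (simp add: add_pos_nonneg less_imp_le sum_nonneg)
  ultimately show "growth_bounded (\<Union>i\<in>I. L i) l"
    unfolding growth_bounded_def by (intro exI[of _ "1 + sum c I"]) simp
qed

lemma growth_le_power_if_card_le:
  fixes L L' :: "'a::finite list set"
  assumes "0 < a" and card_le: "\<And>m. card (words_of_length L m) \<le> card (words_of_length L' (a * m + b))"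
  shows "growth L \<le> growth L' ^ a"
proof (rule growth_le)
  show nonneg: "0 \<le> growth L' ^ a" by (simp add: growth_nonneg)
  fix y assume y: "growth L' ^ a < y"
  define l where "l = root a y"
  have "0 < y" using y nonneg by linarith
  then have l: "0 < l" "l ^ a = y" unfolding l_def using assms(1) by (simp_all add: real_root_pow_pos)
  have "growth L' < l"
    unfolding l_def using real_root_less_mono[OF assms(1) y] real_root_pos2[OF assms(1) growth_nonneg[of L']]
    by simp
  then obtain c where c: "c > 0" "\<And>m. real (card (words_of_length L' m)) \<le> c * l ^ m"
    using growth_bounded_above unfolding growth_bounded_def by blast
  have "real (card (words_of_length L m)) \<le> (c * l ^ b) * y ^ m" for m
  proof -
    have "real (card (words_of_length L m)) \<le> c * l ^ (a * m + b)"
      using card_le[of m] c(2)[of "a * m + b"] by (meson of_nat_le_iff order.trans)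
    also have "\<dots> = (c * l ^ b) * (l ^ a) ^ m" by (simp add: power_add power_mult)
    finally show ?thesis using l(2) by simp
  qed
  moreover have "0 < c * l ^ b" using c(1) l(1) by simp
  ultimately show "growth_bounded L y"
    unfolding growth_bounded_def by (intro exI[of _ "c * l ^ b"]) simp
qed

lemma linear_times_geometric_bounded:
  fixes r :: real
  assumes "0 \<le> r" "r < 1"
  obtains K where "0 < K" "\<And>n. real (n + 1) * r ^ n \<le> K"
proof -
  have "(\<lambda>n. of_nat n * r ^ n) \<longlonglongrightarrow> 0"
    using assms by (intro powser_times_n_limit_0) simp
  then have "Bseq (\<lambda>n. of_nat n * r ^ n)" by (rule convergent_imp_Bseq[OF convergentI])
  then obtain K where K: "0 < K" "\<And>n. norm (of_nat n * r ^ n) \<le> K" by (auto simp: Bseq_def)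
  have "real (n + 1) * r ^ n \<le> K + 1" for n
  proof -
    have "r ^ n \<le> 1" using assms by (simp add: power_le_one)
    moreover have "of_nat n * r ^ n \<le> K" using K(2)[of n] assms by simp
    ultimately show ?thesis by (simp add: distrib_right)
  qed
  with K(1) show ?thesis by (intro that[of "K + 1"]) auto
qed

section \<open>Wrapping one language around another\<close>

definition hairpin_wrap :: "('a \<Rightarrow> 'a) \<Rightarrow> 'a list set \<Rightarrow> 'a list set \<Rightarrow> 'a list set" where
  "hairpin_wrap iv A B = {u @ w @ wbar iv u | u w. u \<in> A \<and> w \<in> B}"

lemma card_hairpin_wrap_le:
  fixes A B :: "'a::finite list set"
  shows "card (words_of_length (hairpin_wrap iv A B) n)
    \<le> (\<Sum>k\<le>n div 2. card (words_of_length A k) * card (words_of_length B (n - 2 * k)))"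
proof -
  let ?f = "\<lambda>(u, w). u @ w @ wbar iv u"
  let ?P = "\<lambda>k. words_of_length A k \<times> words_of_length B (n - 2 * k)"
  have "words_of_length (hairpin_wrap iv A B) n \<subseteq> (\<Union>k\<le>n div 2. ?f ` ?P k)"
  proof
    fix x assume "x \<in> words_of_length (hairpin_wrap iv A B) n"
    then obtain u w where uw: "u \<in> A" "w \<in> B" "x = u @ w @ wbar iv u" "length x = n"
      unfolding hairpin_wrap_def by auto
    show "x \<in> (\<Union>k\<le>n div 2. ?f ` ?P k)"
    proof (rule UN_I)
      show "length u \<in> {..n div 2}" using uw by simp
      show "x \<in> ?f ` ?P (length u)" by (rule rev_image_eqI[of "(u, w)"]) (use uw in simp_all)
    qed
  qed
  then have "card (words_of_length (hairpin_wrap iv A B) n) \<le> card (\<Union>k\<le>n div 2. ?f ` ?P k)"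
    by (intro card_mono finite_UN_I finite_imageI finite_cartesian_product finite_words_of_length
        finite_atMost)
  also have "\<dots> \<le> (\<Sum>k\<le>n div 2. card (?f ` ?P k))"
    by (rule card_UN_le) simp
  also have "\<dots> \<le> (\<Sum>k\<le>n div 2. card (?P k))"
    by (intro sum_mono card_image_le) (simp add: finite_words_of_length)
  finally show ?thesis by (simp add: card_cartesian_product)
qed

lemma card_hairpin_wrap_le_geometric:
  fixes A B :: "'a::finite list set"
  assumes "0 \<le> cA" "0 \<le> cB" "0 \<le> l"
    and A: "\<And>m. real (card (words_of_length A m)) \<le> cA * (l ^ 2) ^ m"
    and B: "\<And>m. real (card (words_of_length B m)) \<le> cB * l ^ m"
  shows "real (card (words_of_length (hairpin_wrap iv A B) n)) \<le> real (n + 1) * (cA * cB * l ^ n)"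
proof -
  have "real (card (words_of_length (hairpin_wrap iv A B) n))
      \<le> (\<Sum>k\<le>n div 2. real (card (words_of_length A k)) * real (card (words_of_length B (n - 2 * k))))"
    using card_hairpin_wrap_le[of iv A B n]
    by (simp only: of_nat_sum[symmetric] of_nat_mult[symmetric] of_nat_le_iff)
  also have "\<dots> \<le> (\<Sum>k\<le>n div 2. cA * cB * l ^ n)"
  proof (rule sum_mono)
    fix k assume "k \<in> {..n div 2}"
    then have "n = 2 * k + (n - 2 * k)" by simp
    then have "l ^ n = (l ^ 2) ^ k * l ^ (n - 2 * k)"
      by (metis power_add power_mult)
    then show "real (card (words_of_length A k)) * real (card (words_of_length B (n - 2 * k)))
        \<le> cA * cB * l ^ n"
      using mult_mono[OF A[of k] B[of "n - 2 * k"]] assms(1,3) by (simp add: ac_simps)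
  qed
  also have "\<dots> \<le> real (n + 1) * (cA * cB * l ^ n)"
    using assms(1-3) by (simp add: mult_right_mono)
  finally show ?thesis .
qed

lemma growth_hairpin_wrap_le:
  fixes A B :: "'a::finite list set"
  shows "growth (hairpin_wrap iv A B) \<le> max (growth B) (sqrt (growth A))"
proof (rule growth_le)
  define x where "x = max (growth B) (sqrt (growth A))"
  show "0 \<le> x" unfolding x_def by (simp add: growth_nonneg le_max_iff_disj)
  fix l assume "x < l"
  define l' where "l' = (x + l) / 2"
  have l': "x < l'" "l' < l" "0 < l'"
    using \<open>x < l\<close> \<open>0 \<le> x\<close> unfolding l'_def by auto
  obtain cB where cB: "0 < cB" "\<And>m. real (card (words_of_length B m)) \<le> cB * l' ^ m"
    using growth_bounded_above[of B l'] l'(1) unfolding growth_bounded_def x_def by auto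
  have "growth A = sqrt (growth A) ^ 2" by (simp add: growth_nonneg)
  also have "\<dots> < l' ^ 2"
    using l'(1) unfolding x_def by (intro power_strict_mono) (auto simp: growth_nonneg)
  finally obtain cA where cA: "0 < cA" "\<And>m. real (card (words_of_length A m)) \<le> cA * (l' ^ 2) ^ m"
    using growth_bounded_above[of A "l' ^ 2"] unfolding growth_bounded_def by auto
  obtain K where K: "0 < K" "\<And>n. real (n + 1) * (l' / l) ^ n \<le> K"
    using linear_times_geometric_bounded[of "l' / l"] l' by auto
  have "real (card (words_of_length (hairpin_wrap iv A B) n)) \<le> (cA * cB * K) * l ^ n" for n
  proof -
    have "real (card (words_of_length (hairpin_wrap iv A B) n)) \<le> real (n + 1) * (cA * cB * l' ^ n)"
      using cA cB l'(3) by (intro card_hairpin_wrap_le_geometric) auto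
    also have "\<dots> = cA * cB * (real (n + 1) * (l' / l) ^ n) * l ^ n"
      using l' by (simp add: power_divide)
    also have "\<dots> \<le> cA * cB * K * l ^ n"
      using K(2)[of n] cA(1) cB(1) l' by (intro mult_right_mono mult_left_mono) auto
    finally show ?thesis .
  qed
  moreover have "0 < cA * cB * K" using cA(1) cB(1) K(1) by simp
  ultimately show "growth_bounded (hairpin_wrap iv A B) l"
    unfolding growth_bounded_def by (intro exI[of _ "cA * cB * K"]) simp
qed

lemma growth_le_growth_hairpin_wrap:
  fixes A B :: "'a::finite list set"
  assumes "u \<in> A"
  shows "growth B \<le> growth (hairpin_wrap iv A B)"
proof -
  have "card (words_of_length B m)
      \<le> card (words_of_length (hairpin_wrap iv A B) (1 * m + 2 * length u))" for m
  proof (rule card_inj_on_le[where f = "\<lambda>w. u @ w @ wbar iv u"])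
    show "(\<lambda>w. u @ w @ wbar iv u) ` words_of_length B m
        \<subseteq> words_of_length (hairpin_wrap iv A B) (1 * m + 2 * length u)"
      using assms unfolding hairpin_wrap_def by auto
  qed (auto simp: inj_on_def finite_words_of_length)
  then show ?thesis using growth_le_power_if_card_le[of 1 B _ "2 * length u"] by simp
qed

lemma sqrt_growth_le_growth_hairpin_wrap:
  fixes A B :: "'a::finite list set"
  assumes "w \<in> B"
  shows "sqrt (growth A) \<le> growth (hairpin_wrap iv A B)"
proof -
  have "card (words_of_length A m)
      \<le> card (words_of_length (hairpin_wrap iv A B) (2 * m + length w))" for m
  proof (rule card_inj_on_le[where f = "\<lambda>u. u @ w @ wbar iv u"])
    show "(\<lambda>u. u @ w @ wbar iv u) ` words_of_length A m
        \<subseteq> words_of_length (hairpin_wrap iv A B) (2 * m + length w)"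
      using assms unfolding hairpin_wrap_def by auto
  qed (auto simp: inj_on_def finite_words_of_length)
  then have "growth A \<le> growth (hairpin_wrap iv A B) ^ 2"
    by (intro growth_le_power_if_card_le) auto
  then show ?thesis by (intro real_le_lsqrt growth_nonneg)
qed

lemma growth_UN_hairpin_wrap:
  fixes A B :: "'i \<Rightarrow> 'a::finite list set"
  assumes fin: "finite I"
    and B_ne: "\<And>i. i \<in> I \<Longrightarrow> B i \<noteq> {}"
    and A_ne: "\<And>i. i \<in> I \<Longrightarrow> \<exists>j\<in>I. A j \<noteq> {} \<and> B j = B i"
  shows "growth (\<Union>i\<in>I. hairpin_wrap iv (A i) (B i)) =
    max (Max (insert 0 ((\<lambda>i. growth (B i)) ` I)))
      (sqrt (Max (insert 0 ((\<lambda>i. growth (A i)) ` I))))"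
    (is "?\<eta> = max ?\<sigma> (sqrt ?\<rho>)")
proof (rule order.antisym)
  have \<sigma>: "growth (B i) \<le> ?\<sigma>" and \<rho>: "growth (A i) \<le> ?\<rho>" if "i \<in> I" for i
    using that fin by (auto intro: Max_ge)
  have wrap_le: "growth (hairpin_wrap iv (A i) (B i)) \<le> ?\<eta>" if "i \<in> I" for i
    using that by (intro growth_mono) auto
  show "?\<eta> \<le> max ?\<sigma> (sqrt ?\<rho>)"
  proof (rule growth_UN_le[OF fin])
    show "0 \<le> max ?\<sigma> (sqrt ?\<rho>)" using fin by (simp add: le_max_iff_disj)
    fix i assume "i \<in> I"
    have "growth (hairpin_wrap iv (A i) (B i)) \<le> max (growth (B i)) (sqrt (growth (A i)))"
      by (rule growth_hairpin_wrap_le)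
    also have "\<dots> \<le> max ?\<sigma> (sqrt ?\<rho>)"
      using \<sigma>[OF \<open>i \<in> I\<close>] \<rho>[OF \<open>i \<in> I\<close>] by (intro max.mono real_sqrt_le_mono)
    finally show "growth (hairpin_wrap iv (A i) (B i)) \<le> max ?\<sigma> (sqrt ?\<rho>)" .
  qed
  have "growth (B i) \<le> ?\<eta>" if i: "i \<in> I" for i
  proof -
    obtain j u where "j \<in> I" "u \<in> A j" "B j = B i" using A_ne[OF i] by blast
    then show ?thesis
      using growth_le_growth_hairpin_wrap[of u "A j" "B j" iv] wrap_le[of j] by simp
  qed
  then have "?\<sigma> \<le> ?\<eta>" using fin by (simp add: growth_nonneg)
  moreover have "sqrt ?\<rho> \<le> ?\<eta>"
  proof (rule real_le_lsqrt[OF growth_nonneg])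
    have "sqrt (growth (A i)) \<le> ?\<eta>" if "i \<in> I" for i
      using B_ne[OF that] sqrt_growth_le_growth_hairpin_wrap[of _ "B i" "A i" iv] wrap_le[OF that]
      by (meson ex_in_conv order.trans)
    then have "growth (A i) \<le> ?\<eta> ^ 2" if "i \<in> I" for i
      using that by (auto intro: sqrt_le_D)
    then show "?\<rho> \<le> ?\<eta> ^ 2" using fin by simp
  qed
  ultimately show "max ?\<sigma> (sqrt ?\<rho>) \<le> ?\<eta>" by simp
qed

section \<open>The automaton\<close>

definition level :: "('s1, 's2) hstate \<Rightarrow> nat" where
  "level s = snd (snd (snd s))"

lemma apath_of_steps:
  assumes "\<And>j. j < length x \<Longrightarrow> E (S j) (x ! j) (S (Suc j))"
  shows "apath E (S 0) x (S (length x))"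
  using assms
proof (induction x arbitrary: S)
  case Nil
  then show ?case by simp
next
  case (Cons a x)
  have "apath E ((S \<circ> Suc) 0) x ((S \<circ> Suc) (length x))"
    by (rule Cons.IH) (use Cons.prems in force)
  moreover have "E (S 0) a (S (Suc 0))" using Cons.prems[of 0] by simp
  ultimately show ?case by (simp del: split_paired_Ex) blast
qed

locale hairpin_automaton =
  fixes iv :: "'a::finite \<Rightarrow> 'a" and \<kappa> :: nat
    and \<delta>1 :: "'s1::finite \<Rightarrow> 'a \<Rightarrow> 's1" and q01 :: 's1 and F1 :: "'s1 set"
    and \<delta>2 :: "'s2::finite \<Rightarrow> 'a \<Rightarrow> 's2" and q02 :: 's2 and F2 :: "'s2 set"
    and L1 L2 :: "'a list set"
  assumes invol: "\<And>a. iv (iv a) = a"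
    and kappa_pos: "0 < \<kappa>"
    and L1_eq: "L1 = dfa_lang \<delta>1 q01 F1"
    and L2_eq: "wbar iv ` L2 = dfa_lang \<delta>2 q02 F2"
begin

abbreviation "E \<equiv> arc iv \<kappa> \<delta>1 q01 F1 \<delta>2 q02 F2"
abbreviation "M \<equiv> Mset iv \<kappa> \<delta>1 q01 F1 \<delta>2 q02 F2"
abbreviation "R \<equiv> Rset iv \<kappa> \<delta>1 q01 F1 \<delta>2 q02 F2"
abbreviation "B \<equiv> Bmu iv \<delta>1 \<delta>2"
abbreviation "H \<equiv> hairpin iv \<kappa> L1 L2"

lemma wbar_wbar_invol [simp]: "wbar iv (wbar iv x) = x"
  by (rule wbar_wbar[OF invol])

lemma mem_L2_iff: "x \<in> L2 \<longleftrightarrow> run \<delta>2 q02 (wbar iv x) \<in> F2"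
proof -
  have "inj (wbar iv)" by (rule injI) (metis wbar_wbar_invol)
  then have "x \<in> L2 \<longleftrightarrow> wbar iv x \<in> wbar iv ` L2" by (simp add: inj_image_mem_iff)
  then show ?thesis by (simp add: L2_eq dfa_lang_def)
qed

definition hairpin_split :: "'a list \<Rightarrow> nat \<Rightarrow> bool" where
  "hairpin_split h j \<longleftrightarrow> (\<exists>\<gamma> \<alpha> \<beta>. length \<gamma> = j \<and> \<kappa> \<le> length \<alpha> \<and>
     h = \<gamma> @ \<alpha> @ \<beta> @ wbar iv \<alpha> @ wbar iv \<gamma> \<and>
     (\<gamma> @ \<alpha> @ \<beta> @ wbar iv \<alpha> \<in> L1 \<or> \<alpha> @ \<beta> @ wbar iv \<alpha> @ wbar iv \<gamma> \<in> L2))"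

lemma mem_hairpin_iff_split: "h \<in> H \<longleftrightarrow> (\<exists>j. hairpin_split h j)"
  unfolding hairpin_def hairpin_split_def by blast

text \<open>The word u w (wbar u) is a completion via \<gamma> = take j u, \<alpha> = drop j u, \<beta> = w.\<close>
definition completes_at :: "'a list \<Rightarrow> 'a list \<Rightarrow> nat \<Rightarrow> bool" where
  "completes_at u w j \<longleftrightarrow>
     u @ w @ wbar iv (drop j u) \<in> L1 \<or> drop j u @ w @ wbar iv u \<in> L2"

lemma hairpin_split_if_completes_at:
  assumes "completes_at u w j" "j + \<kappa> \<le> length u"
  shows "hairpin_split (u @ w @ wbar iv u) j"
  unfolding hairpin_split_def
proof (intro exI conjI)
  show "u @ w @ wbar iv u = take j u @ drop j u @ w @ wbar iv (drop j u) @ wbar iv (take j u)"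
    by (simp flip: wbar_take_drop)
  show "take j u @ drop j u @ w @ wbar iv (drop j u) \<in> L1 \<or>
      drop j u @ w @ wbar iv (drop j u) @ wbar iv (take j u) \<in> L2"
    using assms(1) unfolding completes_at_def by (simp flip: wbar_take_drop)
qed (use assms(2) in simp_all)

lemma completes_at_if_hairpin_split:
  assumes "hairpin_split h j"
  obtains u w where "h = u @ w @ wbar iv u" "length u = j + \<kappa>" "completes_at u w j"
proof -
  obtain \<gamma> \<alpha> \<beta> where split: "length \<gamma> = j" "\<kappa> \<le> length \<alpha>"
    "h = \<gamma> @ \<alpha> @ \<beta> @ wbar iv \<alpha> @ wbar iv \<gamma>"
    "\<gamma> @ \<alpha> @ \<beta> @ wbar iv \<alpha> \<in> L1 \<or> \<alpha> @ \<beta> @ wbar iv \<alpha> @ wbar iv \<gamma> \<in> L2"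
    using assms unfolding hairpin_split_def by blast
  define u where "u = \<gamma> @ take \<kappa> \<alpha>"
  define w where "w = drop \<kappa> \<alpha> @ \<beta> @ wbar iv (drop \<kappa> \<alpha>)"
  have "h = u @ w @ wbar iv u"
    using split(3) wbar_take_drop[of iv \<alpha> \<kappa>] unfolding u_def w_def by simp
  moreover have "length u = j + \<kappa>" using split(1,2) unfolding u_def by simp
  moreover have "completes_at u w j"
    using split(4) wbar_take_drop[of iv \<alpha> \<kappa>]
    unfolding completes_at_def u_def w_def split(1)[symmetric] by simp
  ultimately show thesis by (rule that)
qed

lemma least_completion:
  assumes "h \<in> H"
  obtains g u w where "h = u @ w @ wbar iv u" "length u = g + \<kappa>" "completes_at u w g"
    "\<And>j. j < g \<Longrightarrow> \<not> completes_at u w j"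
proof -
  define g where "g = (LEAST j. hairpin_split h j)"
  have "hairpin_split h g"
    using assms unfolding mem_hairpin_iff_split g_def by (blast intro: LeastI)
  then obtain u w where uw: "h = u @ w @ wbar iv u" "length u = g + \<kappa>" "completes_at u w g"
    by (rule completes_at_if_hairpin_split)
  have "\<not> completes_at u w j" if "j < g" for j
  proof
    assume "completes_at u w j"
    then have "hairpin_split h j" using uw(1,2) that by (simp add: hairpin_split_if_completes_at)
    with \<open>j < g\<close> show False unfolding g_def by (blast dest: not_less_Least)
  qed
  with uw show thesis by (rule that)
qed

definition marked :: "('s1, 's2) hstate \<Rightarrow> bool" where
  "marked s \<longleftrightarrow> fst (snd s) \<in> F1 \<or> fst (snd (snd s)) \<in> F2"

lemma marked_iff_completes_at:
  "marked (P, run \<delta>1 q01 (u @ w @ wbar iv (drop j u)),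
      run \<delta>2 q02 (u @ wbar iv w @ wbar iv (drop j u)), l)
    \<longleftrightarrow> completes_at u w j"
  unfolding marked_def completes_at_def by (simp add: L1_eq dfa_lang_def mem_L2_iff)

lemma apath_runs:
  assumes "apath E ((p1, p2), r1, r2, l) x ((d1, d2), e1, e2, l')"
  shows "d1 = run \<delta>1 p1 x \<and> d2 = run \<delta>2 p2 x \<and>
    r1 = run \<delta>1 e1 (wbar iv x) \<and> r2 = run \<delta>2 e2 (wbar iv x)"
  using assms
proof (induction x arbitrary: p1 p2 r1 r2 l)
  case Nil
  then show ?case by simp
next
  case (Cons a x)
  then obtain q1 q2 l0 where "r1 = \<delta>1 q1 (iv a)" "r2 = \<delta>2 q2 (iv a)"
    "apath E ((\<delta>1 p1 a, \<delta>2 p2 a), q1, q2, l0) x ((d1, d2), e1, e2, l')"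
    unfolding arc_def by auto
  with Cons.IH show ?case by simp
qed

lemma arc_levels:
  assumes "E s a t"
  shows "level s = 0 \<and> level t = 0 \<or> level s = 0 \<and> level t = 1 \<and> marked s \<or>
    0 < level s \<and> level s < \<kappa> \<and> level t = Suc (level s)"
proof -
  obtain p1 p2 q1 q2 l l' where st: "s = ((p1, p2), \<delta>1 q1 (iv a), \<delta>2 q2 (iv a), l)"
    "t = ((\<delta>1 p1 a, \<delta>2 p2 a), q1, q2, l')"
    "l = 0 \<and> l' = 0 \<or> l = 0 \<and> l' = 1 \<and> (\<delta>1 q1 (iv a) \<in> F1 \<or> \<delta>2 q2 (iv a) \<in> F2) \<or>
      1 \<le> l \<and> l < \<kappa> \<and> l' = l + 1"
    using assms unfolding arc_def by blast
  then show ?thesis unfolding level_def marked_def by auto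
qed

lemma apath_level_add:
  assumes "apath E s x t" "0 < level s"
  shows "level t = level s + length x"
  using assms
proof (induction x arbitrary: s)
  case Nil
  then show ?case by simp
next
  case (Cons a x)
  then obtain u where su: "E s a u" "apath E u x t" by auto
  have "level u = Suc (level s)" using arc_levels[OF su(1)] Cons.prems(2) by auto
  with Cons.IH[OF su(2)] show ?case by simp
qed

lemma apath_marked_split:
  assumes "apath E s x t" "level s = 0" "level t = \<kappa>"
  shows "\<exists>x0 \<alpha> s'. x = x0 @ \<alpha> \<and> length \<alpha> = \<kappa> \<and>
    apath E s x0 s' \<and> apath E s' \<alpha> t \<and> marked s'"
  using assms
proof (induction x arbitrary: s)
  case Nil
  then show ?case using kappa_pos by simp
next
  case (Cons a x)
  then obtain u where su: "E s a u" "apath E u x t" by auto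
  show ?case
  proof (cases "level u = 0")
    case True
    with Cons.IH[OF su(2)] Cons.prems(3) obtain x0 \<alpha> s' where
      "x = x0 @ \<alpha>" "length \<alpha> = \<kappa>" "apath E u x0 s'" "apath E s' \<alpha> t" "marked s'"
      by blast
    with su(1) show ?thesis
      by (intro exI[of _ "a # x0"] exI[of _ \<alpha>] exI[of _ s']) (auto simp del: split_paired_Ex)
  next
    case False
    with arc_levels[OF su(1)] Cons.prems(2) have "level u = 1" "marked s" by auto
    moreover have "level t = level u + length x" using apath_level_add su(2) \<open>level u = 1\<close> by simp
    ultimately show ?thesis
      using su Cons.prems by (intro exI[of _ "[]"] exI[of _ "a # x"] exI[of _ s]) auto
  qed
qed

lemma hairpin_wrap_subset_hairpin:
  assumes "\<mu> \<in> M"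
  shows "hairpin_wrap iv (R \<mu>) (B \<mu>) \<subseteq> H"
proof
  fix h assume "h \<in> hairpin_wrap iv (R \<mu>) (B \<mu>)"
  then obtain u w where uw: "u \<in> R \<mu>" "w \<in> B \<mu>" "h = u @ w @ wbar iv u"
    unfolding hairpin_wrap_def by auto
  obtain r1 r2 d1 d2 e1 e2 where \<mu>: "\<mu> = (((q01, q02), r1, r2, 0), ((d1, d2), e1, e2, \<kappa>))"
    using assms unfolding Mset_def init_state_def final_state_def by auto
  have path: "apath E ((q01, q02), r1, r2, 0) u ((d1, d2), e1, e2, \<kappa>)"
    using uw(1) unfolding \<mu> Rset_def by simp
  have w: "e1 = run \<delta>1 d1 w" "e2 = run \<delta>2 d2 (wbar iv w)"
    using uw(2) unfolding \<mu> Bmu_def Bset_def by auto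
  obtain x0 \<alpha> p1 p2 r1' r2' l where split: "u = x0 @ \<alpha>" "length \<alpha> = \<kappa>"
    "apath E ((q01, q02), r1, r2, 0) x0 ((p1, p2), r1', r2', l)"
    "apath E ((p1, p2), r1', r2', l) \<alpha> ((d1, d2), e1, e2, \<kappa>)"
    "marked ((p1, p2), r1', r2', l)"
    using apath_marked_split[OF path] by (auto simp: level_def)
  have r: "r1' = run \<delta>1 q01 (u @ w @ wbar iv (drop (length x0) u))"
    "r2' = run \<delta>2 q02 (u @ wbar iv w @ wbar iv (drop (length x0) u))"
    using apath_runs[OF split(3)] apath_runs[OF split(4)] w split(1) by simp_all
  have "completes_at u w (length x0)"
    using split(5) marked_iff_completes_at[of "(p1, p2)" u w "length x0" l] by (simp only: r)
  then have "hairpin_split h (length x0)"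
    unfolding uw(3) using split(1,2) by (intro hairpin_split_if_completes_at) simp_all
  then show "h \<in> H" unfolding mem_hairpin_iff_split ..
qed

text \<open>The j-th state of the path for u w (wbar u) that jumps to level 1 at position g: the
  first pair runs both DFAs forward on take j u, the middle components are the states from
  which wbar (drop j u) finishes the runs on the candidate words, and the truncated subtraction
  j - g keeps the level at 0 up to position g.\<close>
definition trace :: "'a list \<Rightarrow> 'a list \<Rightarrow> nat \<Rightarrow> nat \<Rightarrow> ('s1, 's2) hstate" where
  "trace u w g j = ((run \<delta>1 q01 (take j u), run \<delta>2 q02 (take j u)),
     run \<delta>1 q01 (u @ w @ wbar iv (drop j u)),
     run \<delta>2 q02 (u @ wbar iv w @ wbar iv (drop j u)),
     j - g)"

lemma trace_is_state:
  assumes "j \<le> length u" "length u \<le> g + \<kappa>"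
  shows "is_state iv \<kappa> \<delta>1 q01 \<delta>2 q02 (trace u w g j)"
proof -
  let ?z = "drop j u @ w @ wbar iv (drop j u)"
  have "?z \<in> Bset iv \<delta>1 \<delta>2 (run \<delta>1 q01 (take j u)) (run \<delta>2 q02 (take j u))
      (run \<delta>1 q01 (u @ w @ wbar iv (drop j u))) (run \<delta>2 q02 (u @ wbar iv w @ wbar iv (drop j u)))"
    unfolding Bset_def
    using run_append[of \<delta>1 q01 "take j u" "drop j u"] run_append[of \<delta>2 q02 "take j u" "drop j u"]
    by simp
  moreover have "(run \<delta>1 q01 (take j u), run \<delta>2 q02 (take j u)) \<in> Q12 \<delta>1 q01 \<delta>2 q02"
    unfolding Q12_def by blast
  ultimately show ?thesis
    using assms unfolding trace_def is_state_def by auto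
qed

lemma trace_arc:
  assumes "j < length u" "length u = g + \<kappa>"
    and "j < g \<Longrightarrow> \<not> completes_at u w j" and "completes_at u w g"
  shows "E (trace u w g j) (u ! j) (trace u w g (Suc j))"
proof -
  let ?a = "u ! j"
  let ?q1 = "run \<delta>1 q01 (u @ w @ wbar iv (drop (Suc j) u))"
  let ?q2 = "run \<delta>2 q02 (u @ wbar iv w @ wbar iv (drop (Suc j) u))"
  have "wbar iv (drop j u) = wbar iv (drop (Suc j) u) @ [iv ?a]"
    using assms(1) by (simp add: Cons_nth_drop_Suc[symmetric])
  then have trace_j: "trace u w g j =
      ((run \<delta>1 q01 (take j u), run \<delta>2 q02 (take j u)), \<delta>1 ?q1 (iv ?a), \<delta>2 ?q2 (iv ?a), j - g)"
    unfolding trace_def by simp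
  have trace_Suc_j: "trace u w g (Suc j) =
      ((\<delta>1 (run \<delta>1 q01 (take j u)) ?a, \<delta>2 (run \<delta>2 q02 (take j u)) ?a), ?q1, ?q2, Suc j - g)"
    using assms(1) unfolding trace_def by (simp add: take_Suc_conv_app_nth)
  have "marked (trace u w g j) \<longleftrightarrow> completes_at u w j"
    unfolding trace_def by (rule marked_iff_completes_at)
  then have mark: "\<delta>1 ?q1 (iv ?a) \<in> F1 \<or> \<delta>2 ?q2 (iv ?a) \<in> F2 \<longleftrightarrow> completes_at u w j"
    unfolding trace_j marked_def by simp
  have levels: "j - g = 0 \<and> Suc j - g = 0 \<and> \<delta>1 ?q1 (iv ?a) \<notin> F1 \<and> \<delta>2 ?q2 (iv ?a) \<notin> F2 \<or>
      j - g = 0 \<and> Suc j - g = 1 \<and> (\<delta>1 ?q1 (iv ?a) \<in> F1 \<or> \<delta>2 ?q2 (iv ?a) \<in> F2) \<or>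
      1 \<le> j - g \<and> j - g < \<kappa> \<and> Suc j - g = j - g + 1"
    using mark assms by (cases "j < g"; cases "j = g") auto
  have "is_state iv \<kappa> \<delta>1 q01 \<delta>2 q02 (trace u w g j)"
    "is_state iv \<kappa> \<delta>1 q01 \<delta>2 q02 (trace u w g (Suc j))"
    using assms(1,2) by (simp_all add: trace_is_state)
  then show ?thesis
    unfolding arc_def trace_j trace_Suc_j using levels by blast
qed

lemma hairpin_subset_UN_hairpin_wrap: "H \<subseteq> (\<Union>\<mu>\<in>M. hairpin_wrap iv (R \<mu>) (B \<mu>))"
proof
  fix h assume "h \<in> H"
  obtain g u w where uw: "h = u @ w @ wbar iv u" "length u = g + \<kappa>" "completes_at u w g"
    "\<And>j. j < g \<Longrightarrow> \<not> completes_at u w j"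
    using least_completion[OF \<open>h \<in> H\<close>] by blast
  let ?I = "trace u w g 0" and ?F = "trace u w g (length u)"
  have path: "apath E ?I u ?F"
    by (rule apath_of_steps[of u _ "trace u w g"]) (use uw in \<open>auto intro: trace_arc\<close>)
  have "init_state iv \<kappa> \<delta>1 q01 \<delta>2 q02 ?I"
    "final_state iv \<kappa> \<delta>1 q01 \<delta>2 q02 ?F"
    using trace_is_state[of 0 u g w] trace_is_state[of "length u" u g w] uw(2)
    unfolding init_state_def final_state_def by (simp_all add: trace_def)
  with path have "(?I, ?F) \<in> M" unfolding Mset_def by blast
  moreover have "u \<in> R (?I, ?F)" using path unfolding Rset_def by simp
  moreover have "w \<in> B (?I, ?F)" unfolding Bmu_def Bset_def trace_def by simp
  ultimately show "h \<in> (\<Union>\<mu>\<in>M. hairpin_wrap iv (R \<mu>) (B \<mu>))"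
    using uw(1) unfolding hairpin_wrap_def by blast
qed

lemma hairpin_eq_UN_hairpin_wrap: "H = (\<Union>\<mu>\<in>M. hairpin_wrap iv (R \<mu>) (B \<mu>))"
  using hairpin_subset_UN_hairpin_wrap hairpin_wrap_subset_hairpin by blast

lemma finite_Mset: "finite M"
proof -
  let ?X = "(UNIV :: ('s1 \<times> 's2) set) \<times> (UNIV :: 's1 set) \<times> (UNIV :: 's2 set) \<times> {..\<kappa>}"
  have "M \<subseteq> ?X \<times> ?X"
    unfolding Mset_def init_state_def final_state_def is_state_def by auto
  then show ?thesis by (rule finite_subset) simp
qed

lemma Bmu_nonempty: "\<mu> \<in> M \<Longrightarrow> B \<mu> \<noteq> {}"
  unfolding Mset_def final_state_def is_state_def Bmu_def by (auto split: prod.splits)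

lemma ex_nonempty_Rset_same_Bmu: "\<mu> \<in> M \<Longrightarrow> \<exists>\<mu>'\<in>M. R \<mu>' \<noteq> {} \<and> B \<mu>' = B \<mu>"
proof -
  assume "\<mu> \<in> M"
  then obtain I F I' v where
    \<mu>: "\<mu> = (I, F)" "init_state iv \<kappa> \<delta>1 q01 \<delta>2 q02 I'" "apath E I' v F"
    unfolding Mset_def by blast
  with \<open>\<mu> \<in> M\<close> have "(I', F) \<in> M" unfolding Mset_def by blast
  moreover have "v \<in> R (I', F)" using \<mu>(3) unfolding Rset_def by simp
  moreover have "B (I', F) = B \<mu>" unfolding \<mu>(1) Bmu_def by simp
  ultimately show ?thesis by blast
qed

end

theorem lemma13:
  fixes iv :: "'a::finite \<Rightarrow> 'a"
    and \<kappa> :: nat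
    and \<delta>1 :: "'s1::finite \<Rightarrow> 'a \<Rightarrow> 's1" and q01 :: 's1 and F1 :: "'s1 set"
    and \<delta>2 :: "'s2::finite \<Rightarrow> 'a \<Rightarrow> 's2" and q02 :: 's2 and F2 :: "'s2 set"
    and L1 L2 :: "'a list set"
  assumes alph: "card (UNIV :: 'a set) \<ge> 2"
    and invol: "\<And>a. iv (iv a) = a"
    and kpos: "\<kappa> > 0"
    and L1_def: "L1 = dfa_lang \<delta>1 q01 F1"
    and L2_def: "wbar iv ` L2 = dfa_lang \<delta>2 q02 F2"
    and L1_sub: "\<forall>w\<in>L1. \<exists>\<alpha> x y. length \<alpha> = \<kappa> \<and> w = x @ \<alpha> @ y @ wbar iv \<alpha>"
    and L2_sub: "\<forall>w\<in>L2. \<exists>\<alpha> x y. length \<alpha> = \<kappa> \<and> w = \<alpha> @ x @ wbar iv \<alpha> @ y"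
  shows "growth (hairpin iv \<kappa> L1 L2) =
     max (Max (insert 0 ((\<lambda>\<mu>. growth (Bmu iv \<delta>1 \<delta>2 \<mu>)) ` Mset iv \<kappa> \<delta>1 q01 F1 \<delta>2 q02 F2)))
         (sqrt (Max (insert 0 ((\<lambda>\<mu>. growth (Rset iv \<kappa> \<delta>1 q01 F1 \<delta>2 q02 F2 \<mu>)) ` Mset iv \<kappa> \<delta>1 q01 F1 \<delta>2 q02 F2))))"
proof -
  interpret hairpin_automaton iv \<kappa> \<delta>1 q01 F1 \<delta>2 q02 F2 L1 L2
    using invol kpos L1_def L2_def by unfold_locales
  show ?thesis
    unfolding hairpin_eq_UN_hairpin_wrap
    by (rule growth_UN_hairpin_wrap[OF finite_Mset Bmu_nonempty ex_nonempty_Rset_same_Bmu])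
qed

end
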